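(* Let $U\subseteq\mathbb{R}^n$ and $1<p<2$. Then for every $k>0$ there exists a constant $C(k)>0$ such that for every two nonnegative functions $f\in L^{2,\infty}(U)$ and $g\in L^p(U)$ there exist functions $\tilde f\in L^{2,\infty}(U)$ and $\tilde g\in L^p(U)$ with $f+g=\tilde f+\tilde g$, $\tilde g\in\{0\}\cup(k,\infty]$ pointwise, $\tilde f\le k$, and $$\|\tilde f\|_{L^{2,\infty}(U)}^2+\|\tilde g\|_{L^p(U)}^p\le C(k)\left(\|f\|_{L^{2,\infty}(U)}^2+\|g\|_{L^p(U)}^p\right).$$
   Context: $L^{2,\infty}(U)$ is the weak $L^2$ space with quasinorm $\|f\|_{L^{2,\infty}(U)}=\sup_{t>0}t\,\mathcal{L}^n(\{x\in U:|f(x)|>t\})^{1/2}$. *)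

theory Defs
  imports "HOL-Analysis.Analysis"
begin

definition weak_L2_norm :: "'a::euclidean_space set \<Rightarrow> ('a \<Rightarrow> real) \<Rightarrow> real" where
  "weak_L2_norm U f = (SUP t\<in>{0<..}. t * sqrt (measure lebesgue {x\<in>U. \<bar>f x\<bar> > t}))"

definition weak_L2 :: "'a::euclidean_space set \<Rightarrow> ('a \<Rightarrow> real) \<Rightarrow> bool" where
  "weak_L2 U f \<longleftrightarrow> f \<in> borel_measurable (restrict_space lebesgue U)
     \<and> (\<forall>t>0. emeasure lebesgue {x\<in>U. \<bar>f x\<bar> > t} < \<infinity>)
     \<and> bdd_above ((\<lambda>t. t * sqrt (measure lebesgue {x\<in>U. \<bar>f x\<bar> > t})) ` {0<..})"

definition Lp_norm :: "real \<Rightarrow> 'a::euclidean_space set \<Rightarrow> ('a \<Rightarrow> real) \<Rightarrow> real" where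
  "Lp_norm p U g = (enn2real (\<integral>\<^sup>+ x\<in>U. ennreal (\<bar>g x\<bar> powr p) \<partial>lebesgue)) powr (1 / p)"

definition Lp :: "real \<Rightarrow> 'a::euclidean_space set \<Rightarrow> ('a \<Rightarrow> real) \<Rightarrow> bool" where
  "Lp p U g \<longleftrightarrow> g \<in> borel_measurable (restrict_space lebesgue U)
     \<and> (\<integral>\<^sup>+ x\<in>U. ennreal (\<bar>g x\<bar> powr p) \<partial>lebesgue) < \<infinity>"

end

theory Submission
  imports Defs
begin

text \<open>Split \<open>h = f + g\<close> at height \<open>k\<close>: \<open>f'\<close> keeps the values of \<open>h\<close> up to \<open>k\<close>, \<open>g'\<close> the
  values above \<open>k\<close>. The level set \<open>{f' > t}\<close> is empty for \<open>t \<ge> k\<close> and otherwise lies in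
  \<open>{f > t/2} \<union> {g > t/2}\<close>; for \<open>t < k\<close> Chebyshev's bound \<open>2\<^sup>p \<parallel>g\<parallel>\<^sub>p\<^sup>p / t\<^sup>p\<close> is at most
  \<open>2\<^sup>p k\<^sup>2\<^sup>-\<^sup>p \<parallel>g\<parallel>\<^sub>p\<^sup>p / t\<^sup>2\<close>, so \<open>f'\<close> is in weak \<open>L\<^sup>2\<close>. Where \<open>h > k\<close> the larger of \<open>f, g\<close>
  exceeds \<open>k/2\<close> and dominates \<open>h/2\<close>, so \<open>g'\<^sup>p \<le> 2\<^sup>p (g\<^sup>p + f\<^sup>p [f > k/2])\<close>. Cutting \<open>{f > a}\<close>
  into the dyadic layers \<open>{2\<^sup>j a < f \<le> 2\<^sup>j\<^sup>+\<^sup>1 a}\<close> bounds \<open>\<integral>\<^bsub>f > a\<^esub> f\<^sup>p\<close> by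
  \<open>\<parallel>f\<parallel>\<^sup>2\<^sub>2\<^sub>,\<^sub>\<infinity>\<close> times a geometric series of ratio \<open>2\<^sup>p\<^sup>-\<^sup>2\<close>, which converges because \<open>p < 2\<close>.\<close>

definition low_part :: "real \<Rightarrow> ('a \<Rightarrow> real) \<Rightarrow> 'a \<Rightarrow> real" where
  "low_part k h x = (if h x \<le> k then h x else 0)"

definition high_part :: "real \<Rightarrow> ('a \<Rightarrow> real) \<Rightarrow> 'a \<Rightarrow> real" where
  "high_part k h x = (if h x \<le> k then 0 else h x)"

lemma low_part_add_high_part: "low_part k h x + high_part k h x = h x"
  by (simp add: low_part_def high_part_def)

lemma low_part_le: "0 \<le> k \<Longrightarrow> low_part k h x \<le> k"
  by (simp add: low_part_def)

lemma high_part_cases: "high_part k h x = 0 \<or> k < high_part k h x"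
  by (simp add: high_part_def)

lemma borel_measurable_low_part:
  assumes [measurable]: "h \<in> borel_measurable M"
  shows "low_part k h \<in> borel_measurable M"
  unfolding low_part_def by measurable

lemma borel_measurable_high_part:
  assumes [measurable]: "h \<in> borel_measurable M"
  shows "high_part k h \<in> borel_measurable M"
  unfolding high_part_def by measurable

lemma emeasure_superlevel_le_powr:
  assumes h: "h \<in> borel_measurable M" and t: "0 < t" and p: "0 < p"
    and I: "(\<integral>\<^sup>+x. ennreal (\<bar>h x\<bar> powr p) \<partial>M) \<le> ennreal I"
  shows "emeasure M {x\<in>space M. t < h x} \<le> ennreal (I / t powr p)"
proof -
  let ?S = "{x\<in>space M. t < h x}"
  have S: "?S \<in> sets M" using h by measurable
  have "emeasure M ?S = (\<integral>\<^sup>+x. indicator ?S x \<partial>M)"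
    using S by simp
  also have "\<dots> \<le> (\<integral>\<^sup>+x. ennreal (1 / t powr p) * ennreal (\<bar>h x\<bar> powr p) \<partial>M)"
  proof (rule nn_integral_mono)
    fix x
    have "t powr p \<le> \<bar>h x\<bar> powr p" if "t < h x"
      using that t p by (intro powr_mono2) auto
    then have "t < h x \<Longrightarrow> 1 \<le> 1 / t powr p * \<bar>h x\<bar> powr p"
      using t by (simp add: field_simps)
    then show "indicator ?S x \<le> ennreal (1 / t powr p) * ennreal (\<bar>h x\<bar> powr p)"
      by (auto simp: indicator_def ennreal_mult[symmetric] ennreal_leI)
  qed
  also have "\<dots> = ennreal (1 / t powr p) * (\<integral>\<^sup>+x. ennreal (\<bar>h x\<bar> powr p) \<partial>M)"
    using h by (intro nn_integral_cmult) measurable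
  also have "\<dots> \<le> ennreal (1 / t powr p) * ennreal I"
    using I by (rule mult_left_mono) simp
  also have "\<dots> = ennreal (I / t powr p)"
    by (simp add: ennreal_mult'[symmetric])
  finally show ?thesis .
qed

lemma powr_indicator_le_dyadic_suminf:
  fixes a p y :: real
  assumes a: "0 < a" and p: "0 < p"
  shows "ennreal (y powr p) * indicator {a<..} y
           \<le> (\<Sum>j. ennreal ((2^Suc j * a) powr p) * indicator {2^j * a<..} y)"
proof (cases "a < y")
  case True
  obtain n where "y / a < 2^n"
    using real_arch_pow[of 2 "y / a"] by auto
  then have "y \<le> 2^n * a"
    using a by (simp add: divide_less_eq less_imp_le)
  then obtain j where j: "\<not> y \<le> 2^j * a" "y \<le> 2^Suc j * a"
    using ex_least_nat_less[of "\<lambda>n. y \<le> 2^n * a"] True by auto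
  have le: "y powr p \<le> (2^Suc j * a) powr p"
    using j(2) True a p by (intro powr_mono2) auto
  define c where "c i = ennreal ((2^Suc i * a) powr p) * indicator {2^i * a<..} y" for i
  have "ennreal (y powr p) * indicator {a<..} y \<le> c j"
    using True j(1) le by (simp add: c_def indicator_def ennreal_leI)
  also have "c j \<le> (\<Sum>i. c i)"
    using sum_le_suminf[of c "{j}"] by (simp add: summableI)
  finally show ?thesis
    by (simp only: c_def)
qed simp

definition dyadic_tail_const :: "real \<Rightarrow> real \<Rightarrow> real" where
  "dyadic_tail_const p a = 2 powr p * a powr (p - 2) / (1 - 2 powr (p - 2))"

lemma two_powr_less_one: "p < 2 \<Longrightarrow> (2::real) powr (p - 2) < 1"
  using powr_less_mono[of "p - 2" 0 2] by simp

lemma dyadic_tail_const_pos: "0 < a \<Longrightarrow> p < 2 \<Longrightarrow> 0 < dyadic_tail_const p a"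
  using two_powr_less_one[of p] by (simp add: dyadic_tail_const_def)

lemma dyadic_tail_term_eq:
  fixes a p N2 :: real
  assumes a: "0 < a"
  shows "(2^Suc j * a) powr p * (N2 / (2^j * a)^2)
           = 2 powr p * a powr (p - 2) * N2 * (2 powr (p - 2))^j"
proof -
  define x where "x = 2^j * a"
  have x: "0 < x" using a by (simp add: x_def)
  have "(2^Suc j * a) powr p * (N2 / (2^j * a)^2) = 2 powr p * N2 * (x powr p / x^2)"
  proof -
    have "(2^Suc j * a) powr p = (2 * x) powr p" by (simp add: x_def mult.assoc)
    also have "\<dots> = 2 powr p * x powr p" using x by (simp add: powr_mult)
    finally show ?thesis by (simp add: x_def)
  qed
  also have "x powr p / x^2 = x powr (p - 2)"
    using x by (simp add: powr_diff powr_numeral)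
  also have "x powr (p - 2) = a powr (p - 2) * (2 powr (p - 2))^j"
    using a by (simp add: x_def powr_mult powr_realpow[symmetric] powr_powr powr_power mult.commute)
  finally show ?thesis
    by (simp add: mult_ac)
qed

lemma nn_integral_powr_tail_le:
  assumes h: "h \<in> borel_measurable M"
    and weak: "\<And>t. 0 < t \<Longrightarrow> emeasure M {x\<in>space M. t < h x} \<le> ennreal (N2 / t^2)"
    and a: "0 < a" and p: "0 < p" "p < 2" and N2: "0 \<le> N2"
  shows "(\<integral>\<^sup>+x. ennreal (h x powr p) * indicator {a<..} (h x) \<partial>M)
           \<le> ennreal (dyadic_tail_const p a * N2)"
proof -
  define A where "A j = {x\<in>space M. 2^j * a < h x}" for j :: nat
  define c where "c j = (2^Suc j * a) powr p" for j :: nat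
  define r where "r = (2::real) powr (p - 2)"
  define B where "B = 2 powr p * a powr (p - 2) * N2"
  have r: "0 \<le> r" "r < 1"
    using two_powr_less_one[OF p(2)] by (auto simp: r_def)
  have A [measurable]: "A j \<in> sets M" for j
    unfolding A_def using h by measurable
  have "(\<integral>\<^sup>+x. ennreal (h x powr p) * indicator {a<..} (h x) \<partial>M)
      \<le> (\<integral>\<^sup>+x. (\<Sum>j. ennreal (c j) * indicator (A j) x) \<partial>M)"
    using powr_indicator_le_dyadic_suminf[OF a p(1)]
    by (intro nn_integral_mono) (auto simp: A_def c_def indicator_def)
  also have "\<dots> = (\<Sum>j. ennreal (c j) * emeasure M (A j))"
    by (simp add: nn_integral_suminf nn_integral_cmult_indicator)
  also have "\<dots> \<le> (\<Sum>j. ennreal (B * r^j))"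
  proof (intro suminf_le summableI)
    fix j
    have "emeasure M (A j) \<le> ennreal (N2 / (2^j * a)^2)"
      unfolding A_def using a by (intro weak) simp
    then have "ennreal (c j) * emeasure M (A j) \<le> ennreal (c j) * ennreal (N2 / (2^j * a)^2)"
      by (rule mult_left_mono) simp
    also have "\<dots> = ennreal (c j * (N2 / (2^j * a)^2))"
      using N2 by (intro ennreal_mult''[symmetric]) simp
    also have "c j * (N2 / (2^j * a)^2) = B * r^j"
      unfolding c_def B_def r_def using dyadic_tail_term_eq[OF a] by simp
    finally show "ennreal (c j) * emeasure M (A j) \<le> ennreal (B * r^j)" .
  qed
  also have "\<dots> = ennreal (B / (1 - r))"
    using r N2 by (simp add: B_def suminf_ennreal2 summable_mult summable_geometric
        suminf_mult suminf_geometric divide_inverse)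
  finally show ?thesis
    by (simp add: dyadic_tail_const_def B_def r_def)
qed

lemma emeasure_superlevel_low_part_le:
  assumes [measurable]: "f \<in> borel_measurable M" "g \<in> borel_measurable M"
    and weak_f: "\<And>t. 0 < t \<Longrightarrow> emeasure M {x\<in>space M. t < f x} \<le> ennreal (N2 / t^2)"
    and weak_g: "\<And>t. 0 < t \<Longrightarrow> emeasure M {x\<in>space M. t < g x} \<le> ennreal (I / t powr p)"
    and N2: "0 \<le> N2" and I: "0 \<le> I" and p: "0 < p" "p < 2" and t: "0 < t"
  shows "emeasure M {x\<in>space M. t < low_part k (\<lambda>x. f x + g x) x}
           \<le> ennreal ((4 * N2 + 2 powr p * k powr (2 - p) * I) / t^2)"
proof (cases "t < k")
  case False
  then have "{x\<in>space M. t < low_part k (\<lambda>x. f x + g x) x} = {}"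
    using t by (auto simp: low_part_def)
  then show ?thesis
    by (metis emeasure_empty zero_le)
next
  case True
  have t2: "0 < t / 2" using t by simp
  have "{x\<in>space M. t < low_part k (\<lambda>x. f x + g x) x}
          \<subseteq> {x\<in>space M. t / 2 < f x} \<union> {x\<in>space M. t / 2 < g x}"
    using t by (auto simp: low_part_def split: if_splits)
  then have "emeasure M {x\<in>space M. t < low_part k (\<lambda>x. f x + g x) x}
          \<le> emeasure M ({x\<in>space M. t / 2 < f x} \<union> {x\<in>space M. t / 2 < g x})"
    by (intro emeasure_mono) measurable
  also have "\<dots> \<le> emeasure M {x\<in>space M. t / 2 < f x} + emeasure M {x\<in>space M. t / 2 < g x}"
    by (intro emeasure_subadditive) measurable
  also have "\<dots> \<le> ennreal (N2 / (t / 2)^2) + ennreal (I / (t / 2) powr p)"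
    using weak_f[OF t2] weak_g[OF t2] by (rule add_mono)
  also have "\<dots> \<le> ennreal ((4 * N2 + 2 powr p * k powr (2 - p) * I) / t^2)"
  proof -
    have "N2 / (t / 2)^2 = 4 * N2 / t^2"
      by (simp add: power_divide)
    moreover have "I / (t / 2) powr p \<le> 2 powr p * k powr (2 - p) * I / t^2"
    proof -
      \<comment> \<open>Below height \<open>k\<close> the Chebyshev bound of order \<open>p\<close> is of weak-\<open>L\<^sup>2\<close> type,
        since \<open>t powr (2 - p) \<le> k powr (2 - p)\<close>.\<close>
      have "I / (t / 2) powr p = 2 powr p * I * t powr (2 - p) / t^2"
        using t by (simp add: powr_divide powr_diff powr_numeral field_simps)
      also have "\<dots> \<le> 2 powr p * I * k powr (2 - p) / t^2"
        using True t p I by (intro divide_right_mono mult_left_mono powr_mono2) auto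
      finally show ?thesis by (simp add: mult_ac)
    qed
    ultimately show ?thesis
      using N2 I t by (simp add: ennreal_plus[symmetric] add_divide_distrib del: ennreal_plus)
  qed
  finally show ?thesis .
qed

lemma powr_add_le_split:
  fixes y z k p :: real
  assumes y: "0 \<le> y" and z: "0 \<le> z" and k: "k < y + z" and p: "0 \<le> p"
  shows "(y + z) powr p \<le> 2 powr p * (y powr p * indicator {k / 2<..} y + z powr p)"
proof (cases "z \<le> y")
  case True
  then have "(y + z) powr p \<le> (2 * y) powr p"
    using y z p by (intro powr_mono2) auto
  also have "\<dots> = 2 powr p * (y powr p * indicator {k / 2<..} y)"
    using True y k by (simp add: powr_mult indicator_def)
  finally show ?thesis
    by (smt (verit) mult_left_mono powr_ge_zero)
next
  case False
  then have "(y + z) powr p \<le> (2 * z) powr p"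
    using y z p by (intro powr_mono2) auto
  also have "\<dots> = 2 powr p * z powr p"
    using z by (simp add: powr_mult)
  finally show ?thesis
    by (smt (verit) indicator_pos_le mult_left_mono mult_nonneg_nonneg powr_ge_zero)
qed

lemma nn_integral_high_part_powr_le:
  assumes [measurable]: "f \<in> borel_measurable M" "g \<in> borel_measurable M"
    and nonneg: "\<And>x. x \<in> space M \<Longrightarrow> 0 \<le> f x \<and> 0 \<le> g x"
    and weak_f: "\<And>t. 0 < t \<Longrightarrow> emeasure M {x\<in>space M. t < f x} \<le> ennreal (N2 / t^2)"
    and strong_g: "(\<integral>\<^sup>+x. ennreal (\<bar>g x\<bar> powr p) \<partial>M) \<le> ennreal I"
    and k: "0 < k" and p: "0 < p" "p < 2" and N2: "0 \<le> N2" and I: "0 \<le> I"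
  shows "(\<integral>\<^sup>+x. ennreal (\<bar>high_part k (\<lambda>x. f x + g x) x\<bar> powr p) \<partial>M)
           \<le> ennreal (2 powr p * (dyadic_tail_const p (k / 2) * N2 + I))"
proof -
  have "(\<integral>\<^sup>+x. ennreal (\<bar>high_part k (\<lambda>x. f x + g x) x\<bar> powr p) \<partial>M)
      \<le> (\<integral>\<^sup>+x. ennreal (2 powr p) * (ennreal (f x powr p) * indicator {k / 2<..} (f x)
                                        + ennreal (\<bar>g x\<bar> powr p)) \<partial>M)"
  proof (rule nn_integral_mono)
    fix x assume "x \<in> space M"
    then have "0 \<le> f x" "0 \<le> g x" using nonneg by auto
    then have "\<bar>high_part k (\<lambda>x. f x + g x) x\<bar> powr p
                 \<le> 2 powr p * (f x powr p * indicator {k / 2<..} (f x) + \<bar>g x\<bar> powr p)"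
      using powr_add_le_split[of "f x" "g x" k p] p by (auto simp: high_part_def)
    then show "ennreal (\<bar>high_part k (\<lambda>x. f x + g x) x\<bar> powr p)
                 \<le> ennreal (2 powr p) * (ennreal (f x powr p) * indicator {k / 2<..} (f x)
                                        + ennreal (\<bar>g x\<bar> powr p))"
      by (auto simp: indicator_def ennreal_mult[symmetric] ennreal_plus[symmetric] ennreal_leI
          simp del: ennreal_plus)
  qed
  also have "\<dots> = ennreal (2 powr p) * ((\<integral>\<^sup>+x. ennreal (f x powr p) * indicator {k / 2<..} (f x) \<partial>M)
                                      + (\<integral>\<^sup>+x. ennreal (\<bar>g x\<bar> powr p) \<partial>M))"
    by (simp add: nn_integral_add nn_integral_cmult)
  also have "\<dots> \<le> ennreal (2 powr p) * (ennreal (dyadic_tail_const p (k / 2) * N2) + ennreal I)"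
    using nn_integral_powr_tail_le[OF _ weak_f _ p N2] strong_g k
    by (intro mult_left_mono add_mono) auto
  also have "\<dots> = ennreal (2 powr p * (dyadic_tail_const p (k / 2) * N2 + I))"
    using dyadic_tail_const_pos[of "k / 2" p] k p N2 I by (simp add: ennreal_mult ennreal_plus)
  finally show ?thesis .
qed

lemma weak_L2_norm_nonneg:
  assumes "weak_L2 U f"
  shows "0 \<le> weak_L2_norm U f"
proof -
  have "1 * sqrt (measure lebesgue {x\<in>U. \<bar>f x\<bar> > 1}) \<le> weak_L2_norm U f"
    using assms unfolding weak_L2_def weak_L2_norm_def by (intro cSUP_upper) auto
  then show ?thesis
    by (meson order_trans real_sqrt_ge_zero mult_nonneg_nonneg zero_le_one measure_nonneg)
qed

lemma weak_L2_emeasure_superlevel_le: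
  assumes U: "U \<in> sets lebesgue" and f: "weak_L2 U f" and t: "0 < t"
  shows "emeasure (restrict_space lebesgue U) {x\<in>U. t < \<bar>f x\<bar>}
           \<le> ennreal ((weak_L2_norm U f)^2 / t^2)"
proof -
  let ?m = "measure lebesgue {x\<in>U. t < \<bar>f x\<bar>}"
  have "t * sqrt ?m \<le> weak_L2_norm U f"
    using f t unfolding weak_L2_def weak_L2_norm_def by (intro cSUP_upper) auto
  then have "(t * sqrt ?m)^2 \<le> (weak_L2_norm U f)^2"
    using t by (intro power_mono) auto
  then have "?m \<le> (weak_L2_norm U f)^2 / t^2"
    using t by (simp add: power_mult_distrib field_simps)
  moreover have "emeasure lebesgue {x\<in>U. t < \<bar>f x\<bar>} = ennreal ?m"
    using f t unfolding weak_L2_def by (intro emeasure_eq_ennreal_measure) auto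
  ultimately show ?thesis
    using U by (simp add: emeasure_restrict_space ennreal_leI)
qed

lemma weak_L2_if_emeasure_superlevel_le:
  assumes U: "U \<in> sets lebesgue" and h: "h \<in> borel_measurable (restrict_space lebesgue U)"
    and Mc: "0 \<le> Mc"
    and bound: "\<And>t. 0 < t \<Longrightarrow>
      emeasure (restrict_space lebesgue U) {x\<in>U. t < \<bar>h x\<bar>} \<le> ennreal (Mc / t^2)"
  shows "weak_L2 U h" and "(weak_L2_norm U h)^2 \<le> Mc"
proof -
  have bound': "emeasure lebesgue {x\<in>U. t < \<bar>h x\<bar>} \<le> ennreal (Mc / t^2)" if "0 < t" for t
    using bound[OF that] U by (simp add: emeasure_restrict_space)
  have fin: "emeasure lebesgue {x\<in>U. t < \<bar>h x\<bar>} < \<infinity>" if "0 < t" for t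
    by (rule le_less_trans[OF bound'[OF that]]) simp
  have le: "t * sqrt (measure lebesgue {x\<in>U. t < \<bar>h x\<bar>}) \<le> sqrt Mc" if t: "0 < t" for t
  proof -
    have "measure lebesgue {x\<in>U. t < \<bar>h x\<bar>} \<le> Mc / t^2"
      using bound'[OF t] fin[OF t] Mc by (simp add: emeasure_eq_ennreal_measure)
    then have "sqrt (measure lebesgue {x\<in>U. t < \<bar>h x\<bar>}) \<le> sqrt (Mc / t^2)"
      by simp
    also have "\<dots> = sqrt Mc / t"
      using t by (simp add: real_sqrt_divide)
    finally
    show ?thesis
      using t by (simp add: field_simps mult.commute)
  qed
  then show w: "weak_L2 U h"
    unfolding weak_L2_def using h fin by (auto intro!: bdd_aboveI2[where M = "sqrt Mc"])
  have "weak_L2_norm U h \<le> sqrt Mc"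
    unfolding weak_L2_norm_def using le by (intro cSUP_least) auto
  then have "(weak_L2_norm U h)^2 \<le> (sqrt Mc)^2"
    using weak_L2_norm_nonneg[OF w] by (intro power_mono) auto
  then show "(weak_L2_norm U h)^2 \<le> Mc"
    using Mc by simp
qed

lemma Lp_norm_powr_eq:
  "0 < p \<Longrightarrow> (Lp_norm p U g) powr p = enn2real (\<integral>\<^sup>+x\<in>U. ennreal (\<bar>g x\<bar> powr p) \<partial>lebesgue)"
  unfolding Lp_norm_def by (simp add: powr_powr)

lemma Lp_nn_integral_eq:
  assumes U: "U \<in> sets lebesgue" and g: "Lp p U g" and p: "0 < p"
  shows "(\<integral>\<^sup>+x. ennreal (\<bar>g x\<bar> powr p) \<partial>restrict_space lebesgue U)
           = ennreal ((Lp_norm p U g) powr p)"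
  using g U p by (simp add: Lp_def Lp_norm_powr_eq nn_integral_restrict_space less_top)

lemma Lp_if_nn_integral_le:
  assumes U: "U \<in> sets lebesgue" and h: "h \<in> borel_measurable (restrict_space lebesgue U)"
    and p: "0 < p" and J: "0 \<le> J"
    and bound: "(\<integral>\<^sup>+x. ennreal (\<bar>h x\<bar> powr p) \<partial>restrict_space lebesgue U) \<le> ennreal J"
  shows "Lp p U h" and "(Lp_norm p U h) powr p \<le> J"
proof -
  have bound': "(\<integral>\<^sup>+x\<in>U. ennreal (\<bar>h x\<bar> powr p) \<partial>lebesgue) \<le> ennreal J"
    using bound U by (simp add: nn_integral_restrict_space)
  then show "Lp p U h"
    unfolding Lp_def using h by (auto intro: le_less_trans)
  show "(Lp_norm p U h) powr p \<le> J"
    using enn2real_mono[OF bound'] J p by (simp add: Lp_norm_powr_eq)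
qed

lemma weak_L2_Lp_split:
  fixes U :: "'a::euclidean_space set"
  assumes U: "U \<in> sets lebesgue" and p: "0 < p" "p < 2" and k: "0 < k"
    and f: "weak_L2 U f" and g: "Lp p U g" and nonneg: "\<forall>x\<in>U. 0 \<le> f x \<and> 0 \<le> g x"
  defines "h \<equiv> \<lambda>x. f x + g x"
  shows "weak_L2 U (low_part k h)" and "Lp p U (high_part k h)"
    and "(weak_L2_norm U (low_part k h))^2 + (Lp_norm p U (high_part k h)) powr p
           \<le> (4 + 2 powr p * dyadic_tail_const p (k / 2)) * (weak_L2_norm U f)^2
               + 2 powr p * (1 + k powr (2 - p)) * (Lp_norm p U g) powr p"
proof -
  let ?R = "restrict_space lebesgue U"
  let ?N2 = "(weak_L2_norm U f)^2" and ?I = "(Lp_norm p U g) powr p"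
  have space_R: "space ?R = U" by simp
  have [measurable]: "f \<in> borel_measurable ?R" "g \<in> borel_measurable ?R"
    using f g by (auto simp: weak_L2_def Lp_def)
  have h [measurable]: "h \<in> borel_measurable ?R"
    unfolding h_def by measurable
  have strong_g: "(\<integral>\<^sup>+x. ennreal (\<bar>g x\<bar> powr p) \<partial>?R) \<le> ennreal ?I"
    using Lp_nn_integral_eq[OF U g p(1)] by simp
  have weak_f: "emeasure ?R {x\<in>space ?R. t < f x} \<le> ennreal (?N2 / t^2)" if "0 < t" for t
  proof -
    have "{x\<in>space ?R. t < f x} = {x\<in>U. t < \<bar>f x\<bar>}" using nonneg by auto
    then show ?thesis using weak_L2_emeasure_superlevel_le[OF U f that] by simp
  qed
  have weak_g: "emeasure ?R {x\<in>space ?R. t < g x} \<le> ennreal (?I / t powr p)" if "0 < t" for t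
    using emeasure_superlevel_le_powr[OF _ that p(1) strong_g] by simp
  have low_superlevel: "emeasure ?R {x\<in>U. t < \<bar>low_part k h x\<bar>}
                          \<le> ennreal ((4 * ?N2 + 2 powr p * k powr (2 - p) * ?I) / t^2)"
    if "0 < t" for t
  proof -
    have "{x\<in>U. t < \<bar>low_part k h x\<bar>} = {x\<in>space ?R. t < low_part k (\<lambda>x. f x + g x) x}"
      using nonneg by (auto simp: h_def low_part_def)
    then show ?thesis
      using emeasure_superlevel_low_part_le[OF _ _ weak_f weak_g _ _ p that] by simp
  qed
  have low: "weak_L2 U (low_part k h)"
    and low_norm: "(weak_L2_norm U (low_part k h))^2 \<le> 4 * ?N2 + 2 powr p * k powr (2 - p) * ?I"
    using weak_L2_if_emeasure_superlevel_le[OF U borel_measurable_low_part[OF h] _ low_superlevel]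
    by simp_all
  have high_integral: "(\<integral>\<^sup>+x. ennreal (\<bar>high_part k h x\<bar> powr p) \<partial>?R)
          \<le> ennreal (2 powr p * (dyadic_tail_const p (k / 2) * ?N2 + ?I))"
    unfolding h_def using nonneg
    by (intro nn_integral_high_part_powr_le[OF _ _ _ weak_f strong_g k p]) auto
  have high: "Lp p U (high_part k h)"
    and high_norm: "(Lp_norm p U (high_part k h)) powr p
                      \<le> 2 powr p * (dyadic_tail_const p (k / 2) * ?N2 + ?I)"
    using Lp_if_nn_integral_le[OF U borel_measurable_high_part[OF h] p(1) _ high_integral]
      dyadic_tail_const_pos[of "k / 2" p] k p
    by simp_all
  show "weak_L2 U (low_part k h)" "Lp p U (high_part k h)"
    using low high by simp_all
  from low_norm high_norm show "(weak_L2_norm U (low_part k h))^2 + (Lp_norm p U (high_part k h)) powr p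
           \<le> (4 + 2 powr p * dyadic_tail_const p (k / 2)) * ?N2 + 2 powr p * (1 + k powr (2 - p)) * ?I"
    by (simp add: algebra_simps)
qed

theorem lemma3p2:
  fixes U :: "'a::euclidean_space set" and p :: real
  assumes "U \<in> sets lebesgue" and "1 < p" and "p < 2"
  shows "\<forall>k>0. \<exists>C>0. \<forall>f g.
           weak_L2 U f \<and> Lp p U g \<and> (\<forall>x\<in>U. f x \<ge> 0 \<and> g x \<ge> 0) \<longrightarrow>
           (\<exists>f' g'. weak_L2 U f' \<and> Lp p U g'
              \<and> (\<forall>x\<in>U. f x + g x = f' x + g' x)
              \<and> (\<forall>x\<in>U. g' x = 0 \<or> g' x > k)
              \<and> (\<forall>x\<in>U. f' x \<le> k)
              \<and> (weak_L2_norm U f')\<^sup>2 + (Lp_norm p U g') powr p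
                  \<le> C * ((weak_L2_norm U f)\<^sup>2 + (Lp_norm p U g) powr p))"
proof (intro allI impI, goal_cases)
  case (1 k)
  have p: "0 < p" "p < 2" using assms(2,3) by auto
  define A where "A = 4 + 2 powr p * dyadic_tail_const p (k / 2)"
  define B where "B = 2 powr p * (1 + k powr (2 - p))"
  have A: "0 < A" and B: "0 \<le> B"
    using dyadic_tail_const_pos[of "k / 2" p] \<open>0 < k\<close> p by (simp_all add: A_def B_def add_pos_nonneg)
  show ?case
  proof (intro exI[of _ "A + B"] conjI allI impI, goal_cases)
    case 1
    show ?case using A B by simp
  next
    case (2 f g)
    then have f: "weak_L2 U f" and g: "Lp p U g" and nonneg: "\<forall>x\<in>U. 0 \<le> f x \<and> 0 \<le> g x"
      by auto
    define h where "h = (\<lambda>x. f x + g x)"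
    note split = weak_L2_Lp_split[OF assms(1) p \<open>0 < k\<close> f g nonneg, folded h_def A_def B_def]
    have "A * (weak_L2_norm U f)^2 + B * (Lp_norm p U g) powr p
            \<le> (A + B) * ((weak_L2_norm U f)^2 + (Lp_norm p U g) powr p)"
      using A B by (simp add: algebra_simps)
    with split(3) have "(weak_L2_norm U (low_part k h))^2 + (Lp_norm p U (high_part k h)) powr p
                          \<le> (A + B) * ((weak_L2_norm U f)^2 + (Lp_norm p U g) powr p)"
      by (rule order_trans)
    with split(1,2) \<open>0 < k\<close> show ?case
      by (intro exI[of _ "low_part k h"] exI[of _ "high_part k h"])
        (auto simp: h_def low_part_add_high_part low_part_le high_part_cases)
  qed
qed

end
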